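(* For $\sigma>0$ let $k_\sigma(x,y) = \exp(-\|x-y\|^2/(2\sigma^2))$ be the Gaussian kernel on $\mathbb R^d$, and let $\langle\cdot,\cdot\rangle_{\sigma'}$ denote the inner product of the RKHS $\mathcal H_{\sigma'}$ of $k_{\sigma'}$. Then for all $x,y,a,b\in\mathbb R^d$, $$\langle k_\sigma(x,\cdot)k_\sigma(y,\cdot),\ k_\sigma(a,\cdot)k_\sigma(b,\cdot)\rangle_{\sigma/\sqrt2} = k_{\sigma\sqrt2}(x,a)\,k_{\sigma\sqrt2}(x,b)\,k_{\sigma\sqrt2}(y,a)\,k_{\sigma\sqrt2}(y,b).$$ *)

theory Defs
  imports "HOL-Analysis.Analysis"
begin

definition gauss_kernel :: "real \<Rightarrow> 'a::euclidean_space \<Rightarrow> 'a \<Rightarrow> real" where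
  "gauss_kernel \<sigma> x y = exp (- ((norm (x - y))\<^sup>2 / (2 * \<sigma>\<^sup>2)))"

text \<open>Kernel sections span: finite linear combinations of k(x_i, .).
  This is the dense pre-Hilbert subspace H_0 of the RKHS of k.\<close>
definition kernel_span :: "('a \<Rightarrow> 'a \<Rightarrow> real) \<Rightarrow> ('a \<Rightarrow> real) set" where
  "kernel_span k = {f. \<exists>(n::nat) c X. f = (\<lambda>z. \<Sum>i<n. c i * k (X i) z)}"

text \<open>This value does not depend on the chosen representations. The inner product
  of the full RKHS (the completion) restricts to this on H_0.\<close>
definition rkhs_inner :: "('a \<Rightarrow> 'a \<Rightarrow> real) \<Rightarrow> ('a \<Rightarrow> real) \<Rightarrow> ('a \<Rightarrow> real) \<Rightarrow> real" where
  "rkhs_inner k f g = (SOME v. \<exists>(n::nat) c X (m::nat) d Y.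
      f = (\<lambda>z. \<Sum>i<n. c i * k (X i) z) \<and> g = (\<lambda>z. \<Sum>j<m. d j * k (Y j) z) \<and>
      v = (\<Sum>i<n. \<Sum>j<m. c i * d j * k (X i) (Y j)))"

end

theory Submission
  imports Defs
begin

text \<open>The product of two Gaussians of bandwidth \<open>\<sigma>\<close> centred at \<open>x\<close> and \<open>y\<close> is a constant multiple
  of the single Gaussian of bandwidth \<open>\<sigma> / sqrt 2\<close> centred at the midpoint of \<open>x\<close> and \<open>y\<close>. Hence
  both factors of the inner product are scaled kernel sections of the smaller bandwidth, and by the
  reproducing property their inner product is the kernel evaluated at the two midpoints. A
  parallelogram-type identity for the four distances \<open>|x - a|, |x - b|, |y - a|, |y - b|\<close> turns
  the resulting exponent into the right-hand side.\<close>

lemma norm_diff_sq_add_eq_midpoint: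
  fixes x y z :: "'a::real_inner"
  shows "(norm (x - z))\<^sup>2 + (norm (y - z))\<^sup>2
       = 2 * (norm ((1/2) *\<^sub>R (x + y) - z))\<^sup>2 + (norm (x - y))\<^sup>2 / 2"
  by (simp add: power2_norm_eq_inner inner_simps inner_commute algebra_simps)
     (simp add: add_divide_distrib diff_divide_distrib)

lemma norm_diff_sq_four_eq_midpoints:
  fixes x y a b :: "'a::real_inner"
  shows "(norm (x - a))\<^sup>2 + (norm (x - b))\<^sup>2 + (norm (y - a))\<^sup>2 + (norm (y - b))\<^sup>2
       = (norm (x - y))\<^sup>2 + (norm (a - b))\<^sup>2
         + 4 * (norm ((1/2) *\<^sub>R (x + y) - (1/2) *\<^sub>R (a + b)))\<^sup>2"
  by (simp add: power2_norm_eq_inner inner_simps inner_commute algebra_simps)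

lemma gauss_kernel_commute: "gauss_kernel \<sigma> x y = gauss_kernel \<sigma> y x"
  unfolding gauss_kernel_def by (simp add: norm_minus_commute)

lemma gauss_kernel_mult_midpoint:
  fixes x y z :: "'a::euclidean_space"
  assumes "\<sigma> \<noteq> 0"
  shows "gauss_kernel \<sigma> x z * gauss_kernel \<sigma> y z
     = exp (- ((norm (x - y))\<^sup>2 / (4 * \<sigma>\<^sup>2))) * gauss_kernel (\<sigma> / sqrt 2) ((1/2) *\<^sub>R (x + y)) z"
proof -
  have "(norm (x - z))\<^sup>2 / (2 * \<sigma>\<^sup>2) + (norm (y - z))\<^sup>2 / (2 * \<sigma>\<^sup>2)
      = (norm (x - y))\<^sup>2 / (4 * \<sigma>\<^sup>2) + (norm ((1/2) *\<^sub>R (x + y) - z))\<^sup>2 / (2 * (\<sigma> / sqrt 2)\<^sup>2)"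
    using assms unfolding add_divide_distrib[symmetric] norm_diff_sq_add_eq_midpoint
    by (simp add: power_divide field_simps)
  then show ?thesis
    unfolding gauss_kernel_def exp_add[symmetric] by (simp add: algebra_simps)
qed

lemma gauss_kernel_four_product:
  fixes x y a b :: "'a::euclidean_space"
  assumes "\<sigma> \<noteq> 0"
  shows "gauss_kernel (\<sigma> * sqrt 2) x a * gauss_kernel (\<sigma> * sqrt 2) x b
        * gauss_kernel (\<sigma> * sqrt 2) y a * gauss_kernel (\<sigma> * sqrt 2) y b
      = exp (- ((norm (x - y))\<^sup>2 / (4 * \<sigma>\<^sup>2))) * exp (- ((norm (a - b))\<^sup>2 / (4 * \<sigma>\<^sup>2)))
        * gauss_kernel (\<sigma> / sqrt 2) ((1/2) *\<^sub>R (x + y)) ((1/2) *\<^sub>R (a + b))"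
proof -
  have "((norm (x - a))\<^sup>2 + (norm (x - b))\<^sup>2 + (norm (y - a))\<^sup>2 + (norm (y - b))\<^sup>2) / (4 * \<sigma>\<^sup>2)
      = (norm (x - y))\<^sup>2 / (4 * \<sigma>\<^sup>2) + (norm (a - b))\<^sup>2 / (4 * \<sigma>\<^sup>2)
        + (norm ((1/2) *\<^sub>R (x + y) - (1/2) *\<^sub>R (a + b)))\<^sup>2 / (2 * (\<sigma> / sqrt 2)\<^sup>2)"
    using assms unfolding norm_diff_sq_four_eq_midpoints by (simp add: power_divide field_simps)
  then show ?thesis
    unfolding gauss_kernel_def exp_add[symmetric]
    by (simp add: power_mult_distrib add_divide_distrib algebra_simps)
qed

lemma kernel_double_sum_eq_left:
  fixes k :: "'a \<Rightarrow> 'b \<Rightarrow> real"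
  assumes "f = (\<lambda>z. \<Sum>i<n. c i * k (X i) z)"
  shows "(\<Sum>i<n. \<Sum>j<m. c i * d j * k (X i) (Y j)) = (\<Sum>j<m. d j * f (Y j))"
  unfolding assms by (subst sum.swap) (simp add: sum_distrib_left mult_ac)

lemma kernel_double_sum_eq_right:
  fixes k :: "'a \<Rightarrow> 'a \<Rightarrow> real"
  assumes "\<And>u v. k u v = k v u" and "g = (\<lambda>z. \<Sum>j<m. d j * k (Y j) z)"
  shows "(\<Sum>i<n. \<Sum>j<m. c i * d j * k (X i) (Y j)) = (\<Sum>i<n. c i * g (X i))"
  unfolding assms(2) by (simp add: sum_distrib_left mult_ac assms(1)[of "X _"])

lemma rkhs_inner_kernel_sums:
  fixes n m :: nat
  assumes sym: "\<And>u v. k u v = k v u"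
  shows "rkhs_inner k (\<lambda>z. \<Sum>i<n. c i * k (X i) z) (\<lambda>z. \<Sum>j<m. d j * k (Y j) z)
       = (\<Sum>i<n. \<Sum>j<m. c i * d j * k (X i) (Y j))"
    (is "rkhs_inner k ?f ?g = ?v")
proof -
  have unique: "v = ?v"
    if f: "?f = (\<lambda>z. \<Sum>i<n'. c' i * k (X' i) z)" and g: "?g = (\<lambda>z. \<Sum>j<m'. d' j * k (Y' j) z)"
      and v: "v = (\<Sum>i<n'. \<Sum>j<m'. c' i * d' j * k (X' i) (Y' j))"
    for v n' c' X' m' d' Y'
  proof -
    have "v = (\<Sum>i<n'. c' i * ?g (X' i))"
      unfolding v by (rule kernel_double_sum_eq_right[OF sym g])
    also have "\<dots> = (\<Sum>i<n'. \<Sum>j<m. c' i * d j * k (X' i) (Y j))"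
      by (rule kernel_double_sum_eq_right[OF sym refl, symmetric])
    also have "\<dots> = (\<Sum>j<m. d j * ?f (Y j))"
      using kernel_double_sum_eq_left[OF refl] f by (simp add: fun_eq_iff)
    also have "\<dots> = ?v"
      by (rule kernel_double_sum_eq_left[OF refl, symmetric])
    finally show ?thesis .
  qed
  show ?thesis
    unfolding rkhs_inner_def by (rule some_equality) (blast, use unique in blast)
qed

lemma rkhs_inner_kernel_sections:
  assumes "\<And>u v. k u v = k v u"
  shows "rkhs_inner k (\<lambda>z. c * k p z) (\<lambda>z. d * k q z) = c * d * k p q"
  using rkhs_inner_kernel_sums[where k = k, OF assms, where n = 1 and c = "\<lambda>_. c" and X = "\<lambda>_. p"
      and m = 1 and d = "\<lambda>_. d" and Y = "\<lambda>_. q"] by simp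

lemma kernel_section_in_kernel_span: "(\<lambda>z. c * k p z) \<in> kernel_span k"
  unfolding kernel_span_def
  by (rule CollectI, rule exI[of _ 1], rule exI[of _ "\<lambda>_. c"], rule exI[of _ "\<lambda>_. p"]) simp

theorem lemma5:
  fixes \<sigma> :: real and x y a b :: "'a::euclidean_space"
  assumes "\<sigma> > 0"
  shows "(\<lambda>z. gauss_kernel \<sigma> x z * gauss_kernel \<sigma> y z) \<in> kernel_span (gauss_kernel (\<sigma> / sqrt 2))
    \<and> (\<lambda>z. gauss_kernel \<sigma> a z * gauss_kernel \<sigma> b z) \<in> kernel_span (gauss_kernel (\<sigma> / sqrt 2))
    \<and> rkhs_inner (gauss_kernel (\<sigma> / sqrt 2))
        (\<lambda>z. gauss_kernel \<sigma> x z * gauss_kernel \<sigma> y z)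
        (\<lambda>z. gauss_kernel \<sigma> a z * gauss_kernel \<sigma> b z)
      = gauss_kernel (\<sigma> * sqrt 2) x a * gauss_kernel (\<sigma> * sqrt 2) x b
        * gauss_kernel (\<sigma> * sqrt 2) y a * gauss_kernel (\<sigma> * sqrt 2) y b"
proof -
  have "\<sigma> \<noteq> 0" using assms by simp
  have inner_sections: "rkhs_inner (gauss_kernel (\<sigma> / sqrt 2)) (\<lambda>z. c * gauss_kernel (\<sigma> / sqrt 2) p z)
      (\<lambda>z. d * gauss_kernel (\<sigma> / sqrt 2) q z) = c * d * gauss_kernel (\<sigma> / sqrt 2) p q" for c d p q
    by (rule rkhs_inner_kernel_sections) (rule gauss_kernel_commute)
  show ?thesis
    unfolding gauss_kernel_mult_midpoint[OF \<open>\<sigma> \<noteq> 0\<close>] gauss_kernel_four_product[OF \<open>\<sigma> \<noteq> 0\<close>]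
    by (simp add: kernel_section_in_kernel_span inner_sections)
qed

end
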